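(* Let $X\subset\mathbb{Z}^n$ and let $d$ be an $\ell_p$ metric on $X$ for some $1\le p\le\infty$, so that $(X,d,c_1)$ is a digital metric space. Let $T:X\to X$ be a weakly uniformly strict digital contraction. If $X$ is $c_1$-connected, then $T$ is constant.
   Context: Distinct $p,q\in\mathbb{Z}^n$ are $c_1$-adjacent if they differ by exactly $1$ in exactly one coordinate. $X$ is $c_1$-connected if the graph on $X$ given by $c_1$-adjacency is connected. The $\ell_p$ metric is $d(x,y)=(\sum_i|x_i-y_i|^p)^{1/p}$ for $1\le p<\infty$ and $\max_i|x_i-y_i|$ for $p=\infty$. $T:X\to X$ is a weakly uniformly strict digital contraction if for every $\varepsilon>0$ there exists $\delta>0$ such that for all $x,y\in X$, $\varepsilon\le d(x,y)<\varepsilon+\delta$ implies $d(T(x),T(y))<\varepsilon$. *)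

theory Defs
  imports "HOL-Analysis.Analysis" "HOL-Library.Extended_Real"
begin

definition c1_adj :: "int ^ 'n \<Rightarrow> int ^ 'n \<Rightarrow> bool" where
  "c1_adj p q \<longleftrightarrow> p \<noteq> q \<and>
     (\<exists>i. \<bar>p $ i - q $ i\<bar> = 1 \<and> (\<forall>j. j \<noteq> i \<longrightarrow> p $ j = q $ j))"

definition c1_connected :: "(int ^ 'n) set \<Rightarrow> bool" where
  "c1_connected X \<longleftrightarrow>
     (\<forall>x\<in>X. \<forall>y\<in>X. (\<lambda>a b. a \<in> X \<and> b \<in> X \<and> c1_adj a b)\<^sup>*\<^sup>* x y)"

definition lp_dist :: "ereal \<Rightarrow> int ^ 'n \<Rightarrow> int ^ 'n \<Rightarrow> real" where
  "lp_dist p x y =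
     (if p = \<infinity> then Max (range (\<lambda>i. real_of_int \<bar>x $ i - y $ i\<bar>))
      else (\<Sum>i\<in>UNIV. real_of_int \<bar>x $ i - y $ i\<bar> powr real_of_ereal p) powr (1 / real_of_ereal p))"

definition weakly_uniformly_strict_digital_contraction ::
  "('a \<Rightarrow> 'a \<Rightarrow> real) \<Rightarrow> 'a set \<Rightarrow> ('a \<Rightarrow> 'a) \<Rightarrow> bool" where
  "weakly_uniformly_strict_digital_contraction d X T \<longleftrightarrow>
     (\<forall>\<epsilon>>0. \<exists>\<delta>>0. \<forall>x\<in>X. \<forall>y\<in>X.
        \<epsilon> \<le> d x y \<and> d x y < \<epsilon> + \<delta> \<longrightarrow> d (T x) (T y) < \<epsilon>)"

end

theory Submission
  imports Defs
begin

text \<open>On \<open>\<int>\<^sup>n\<close> every \<open>\<ell>\<^sub>p\<close> distance between distinct points is at least 1, with equality for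
  \<open>c\<^sub>1\<close>-adjacent points. Applying the contraction condition with \<open>\<epsilon> = 1\<close> therefore forces
  \<open>T\<close> to identify adjacent points, and \<open>c\<^sub>1\<close>-connectedness propagates this to all of \<open>X\<close>.\<close>

lemma real_of_ereal_ge_1:
  assumes "1 \<le> p" and "p \<noteq> \<infinity>"
  shows "1 \<le> real_of_ereal p"
  using assms by (cases p) auto

lemma lp_dist_c1_adj:
  fixes x y :: "int ^ 'n"
  assumes "1 \<le> p" and "c1_adj x y"
  shows "lp_dist p x y = 1"
proof -
  from \<open>c1_adj x y\<close> obtain i where "\<bar>x $ i - y $ i\<bar> = 1" and "\<And>j. j \<noteq> i \<Longrightarrow> x $ j = y $ j"
    unfolding c1_adj_def by blast
  then have coord: "\<And>j. real_of_int \<bar>x $ j - y $ j\<bar> = (if j = i then 1 else 0)"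
    by auto
  show ?thesis
  proof (cases "p = \<infinity>")
    case True
    have "Max (range (\<lambda>j. if j = i then 1 else 0 :: real)) = 1"
      by (rule Max_eqI) auto
    then show ?thesis
      unfolding lp_dist_def if_P[OF True] coord .
  next
    case False
    then have "real_of_ereal p \<noteq> 0"
      using real_of_ereal_ge_1[OF \<open>1 \<le> p\<close>] by simp
    then have "(if j = i then 1 else 0 :: real) powr real_of_ereal p = (if j = i then 1 else 0)" for j
      by simp
    then have "(\<Sum>j\<in>UNIV. real_of_int \<bar>x $ j - y $ j\<bar> powr real_of_ereal p) = 1"
      unfolding coord by simp
    then show ?thesis
      unfolding lp_dist_def if_not_P[OF False] by simp
  qed
qed

lemma lp_dist_ge_1:
  fixes x y :: "int ^ 'n"
  assumes "1 \<le> p" and "x \<noteq> y"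
  shows "1 \<le> lp_dist p x y"
proof -
  from \<open>x \<noteq> y\<close> obtain i where "x $ i \<noteq> y $ i"
    by (metis vec_eq_iff)
  then have coord: "1 \<le> real_of_int \<bar>x $ i - y $ i\<bar>"
    by linarith
  show ?thesis
  proof (cases "p = \<infinity>")
    case True
    have "real_of_int \<bar>x $ i - y $ i\<bar> \<le> Max (range (\<lambda>j. real_of_int \<bar>x $ j - y $ j\<bar>))"
      by (rule Max_ge) auto
    then show ?thesis
      unfolding lp_dist_def if_P[OF True] using coord by linarith
  next
    case False
    have q: "1 \<le> real_of_ereal p"
      using real_of_ereal_ge_1[OF \<open>1 \<le> p\<close> False] .
    have "1 \<le> real_of_int \<bar>x $ i - y $ i\<bar> powr real_of_ereal p"
      using coord q by (simp add: ge_one_powr_ge_zero)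
    also have "\<dots> \<le> (\<Sum>j\<in>UNIV. real_of_int \<bar>x $ j - y $ j\<bar> powr real_of_ereal p)"
      by (rule member_le_sum) auto
    finally have "1 \<le> (\<Sum>j\<in>UNIV. real_of_int \<bar>x $ j - y $ j\<bar> powr real_of_ereal p) powr (1 / real_of_ereal p)"
      using q by (simp add: ge_one_powr_ge_zero)
    then show ?thesis
      unfolding lp_dist_def if_not_P[OF False] .
  qed
qed

lemma weakly_uniformly_strict_digital_contraction_eq_at_min_dist:
  assumes "weakly_uniformly_strict_digital_contraction d X T"
    and "0 < \<epsilon>" and min_dist: "\<And>u v. u \<noteq> v \<Longrightarrow> \<epsilon> \<le> d u v"
    and "x \<in> X" "y \<in> X" "d x y = \<epsilon>"
  shows "T x = T y"
proof (rule ccontr)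
  assume "T x \<noteq> T y"
  then have "\<epsilon> \<le> d (T x) (T y)"
    by (rule min_dist)
  moreover obtain \<delta> where "0 < \<delta>"
    and "\<forall>x\<in>X. \<forall>y\<in>X. \<epsilon> \<le> d x y \<and> d x y < \<epsilon> + \<delta> \<longrightarrow> d (T x) (T y) < \<epsilon>"
    using assms(1,2) unfolding weakly_uniformly_strict_digital_contraction_def by blast
  then have "d (T x) (T y) < \<epsilon>"
    using assms(4-6) by simp
  ultimately show False
    by simp
qed

lemma rtranclp_imp_eq_if_steps_eq:
  assumes "R\<^sup>*\<^sup>* x y" and "\<And>a b. R a b \<Longrightarrow> f a = f b"
  shows "f x = f y"
  using assms by (induction rule: rtranclp_induct) auto

lemma c1_connected_imp_constant:
  assumes "c1_connected X"
    and "\<And>x y. x \<in> X \<Longrightarrow> y \<in> X \<Longrightarrow> c1_adj x y \<Longrightarrow> f x = f y"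
  shows "\<exists>c. \<forall>x\<in>X. f x = c"
proof (cases "X = {}")
  case False
  then obtain x0 where "x0 \<in> X"
    by blast
  have "f x = f x0" if "x \<in> X" for x
    using assms \<open>x0 \<in> X\<close> that unfolding c1_connected_def
    by (blast intro: rtranclp_imp_eq_if_steps_eq)
  then show ?thesis
    by blast
qed simp

theorem corollary8p6:
  fixes X :: "(int ^ 'n) set" and T :: "int ^ 'n \<Rightarrow> int ^ 'n" and p :: ereal
  assumes "1 \<le> p"
    and "T ` X \<subseteq> X"
    and "weakly_uniformly_strict_digital_contraction (lp_dist p) X T"
    and "c1_connected X"
  shows "\<exists>c. \<forall>x\<in>X. T x = c"
proof (rule c1_connected_imp_constant[OF assms(4)])
  fix x y
  assume "x \<in> X" "y \<in> X" "c1_adj x y"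
  then show "T x = T y"
    using weakly_uniformly_strict_digital_contraction_eq_at_min_dist[OF assms(3) zero_less_one]
      lp_dist_ge_1[OF assms(1)] lp_dist_c1_adj[OF assms(1)]
    by blast
qed

end
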